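(* Let $n\geq 1$ and $N > n$, and consider the operator on symmetric polynomials in $x_1,\ldots,x_N$ $$D^\ast = \sum_{i=1}^N x_i^2\frac{\partial^2}{\partial x_i^2} + \sum_{i\neq j}\frac{1}{x_i-x_j}\left(x_i^2\frac{\partial}{\partial x_i} - x_j^2\frac{\partial}{\partial x_j}\right).$$ Then for every $\sigma\in P(n)$, $$\tfrac12 D^\ast(p_\sigma) = n(N-1)\,p_\sigma + \sum_{\lambda\in P(n)} (A_n)_{\sigma\lambda}\, p_\lambda;$$ that is, the matrix of $\frac12 D^\ast$ on the span of $\{p_\lambda\}_{\lambda\in P(n)}$ with respect to this basis (columns giving the coordinates of the images of basis vectors) is $A_n^T + n(N-1)I$.
   Context: $P(n)$ is the set of partitions of $n$. $p_r = \sum_{i=1}^N x_i^r$ and, for $\lambda = 1^{k_1}2^{k_2}\cdots$, $p_\lambda = p_1^{k_1}p_2^{k_2}\cdots$ (power sum symmetric polynomials). $A_n$ is the square matrix indexed by $P(n)$ whose $(\lambda,\sigma)$ entry is the number of transpositions $\tau\in S_n$ such that $\tau\alpha$ has cycle type $\sigma$, where $\alpha$ is any fixed permutation of cycle type $\lambda$. *)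

theory Defs
  imports "HOL-Analysis.Analysis" "HOL-Library.Multiset" "HOL-Combinatorics.Combinatorics"
begin

definition partitions :: "nat \<Rightarrow> nat multiset set" where
  "partitions n = {lam. (\<forall>k\<in>#lam. 0 < k) \<and> sum_mset lam = n}"

definition psum :: "nat \<Rightarrow> nat \<Rightarrow> (nat \<Rightarrow> real) \<Rightarrow> real" where
  "psum N r x = (\<Sum>i<N. x i ^ r)"

definition ppart :: "nat \<Rightarrow> nat multiset \<Rightarrow> (nat \<Rightarrow> real) \<Rightarrow> real" where
  "ppart N lam x = prod_mset (image_mset (\<lambda>r. psum N r x) lam)"

definition partial :: "nat \<Rightarrow> ((nat \<Rightarrow> real) \<Rightarrow> real) \<Rightarrow> (nat \<Rightarrow> real) \<Rightarrow> real" where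
  "partial i f x = deriv (\<lambda>t. f (x(i := t))) (x i)"

text \<open>The operator D^* (applied at points with pairwise distinct coordinates).\<close>
definition Dstar :: "nat \<Rightarrow> ((nat \<Rightarrow> real) \<Rightarrow> real) \<Rightarrow> (nat \<Rightarrow> real) \<Rightarrow> real" where
  "Dstar N f x =
     (\<Sum>i<N. x i ^ 2 * partial i (partial i f) x)
   + (\<Sum>i<N. \<Sum>j<N. if i \<noteq> j
        then (x i ^ 2 * partial i f x - x j ^ 2 * partial j f x) / (x i - x j) else 0)"

definition orbit_of :: "(nat \<Rightarrow> nat) \<Rightarrow> nat \<Rightarrow> nat set" where
  "orbit_of \<alpha> x = {(\<alpha> ^^ k) x | k. True}"

definition cycle_type :: "nat \<Rightarrow> (nat \<Rightarrow> nat) \<Rightarrow> nat multiset" where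
  "cycle_type n \<alpha> = image_mset card (mset_set (orbit_of \<alpha> ` {..<n}))"

definition A_mat :: "nat \<Rightarrow> nat multiset \<Rightarrow> nat multiset \<Rightarrow> nat" where
  "A_mat n lam sig =
     (let \<alpha> = (SOME \<alpha>. \<alpha> permutes {..<n} \<and> cycle_type n \<alpha> = lam)
      in card {(a, b). a < b \<and> b < n \<and> cycle_type n (Transposition.transpose a b \<circ> \<alpha>) = sig})"

end

theory Submission
  imports Defs
begin

text \<open>Write \<open>p\<^sub>\<sigma>\<close> as the product of the power sums \<open>p\<^sub>|\<^sub>C\<^sub>|\<close> over the cycles
  \<open>C\<close> of a permutation \<open>\<alpha>\<close> of cycle type \<open>\<sigma>\<close>. Applied to such a product, \<open>D\<^sup>*\<close>
  gives, besides a multiple of \<open>p\<^sub>\<sigma>\<close>, two kinds of terms: a factor \<open>p\<^sub>r\<close> is replaced by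
  the sum of \<open>p\<^sub>k p\<^sub>r\<^sub>-\<^sub>k\<close> over \<open>0 < k < r\<close> (this comes from the divided differences
  \<open>(x\<^sub>i\<^sup>r\<^sup>+\<^sup>1 - x\<^sub>j\<^sup>r\<^sup>+\<^sup>1) / (x\<^sub>i - x\<^sub>j)\<close>), and two factors \<open>p\<^sub>r p\<^sub>s\<close> are
  merged into \<open>p\<^sub>r\<^sub>+\<^sub>s\<close> (from the mixed terms of the second derivative). On the other side,
  composing \<open>\<alpha>\<close> with the transposition \<open>(a b)\<close> cuts the cycle of \<open>a\<close> into cycles of
  lengths \<open>k\<close> and \<open>r - k\<close> if \<open>b = \<alpha>\<^sup>k a\<close> lies on it, and joins the cycles of \<open>a\<close>
  and \<open>b\<close> otherwise. Summing over the pairs \<open>a < b\<close> produces the same terms with the same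
  multiplicities.\<close>

section \<open>The operator \<open>D\<^sup>*\<close> on products of power sums\<close>

definition psum_prod :: "nat \<Rightarrow> 'j set \<Rightarrow> ('j \<Rightarrow> nat) \<Rightarrow> (nat \<Rightarrow> real) \<Rightarrow> real" where
  "psum_prod N J g y = (\<Prod>j\<in>J. psum N (g j) y)"

lemma psum_prod_remove:
  "finite J \<Longrightarrow> j \<in> J \<Longrightarrow> psum_prod N J g y = psum N (g j) y * psum_prod N (J - {j}) g y"
  unfolding psum_prod_def by (rule prod.remove)

lemma psum_fun_upd:
  assumes "i < N"
  shows "psum N r (y(i := t)) = t ^ r + (\<Sum>l\<in>{..<N} - {i}. y l ^ r)"
  unfolding psum_def using assms by (simp add: sum.remove[of "{..<N}" i])

lemma has_field_derivative_psum_fun_upd: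
  "i < N \<Longrightarrow> ((\<lambda>t. psum N r (y(i := t))) has_field_derivative real r * t ^ (r - 1)) (at t)"
  unfolding psum_fun_upd by (auto intro!: derivative_eq_intros)

lemma has_field_derivative_psum_prod_fun_upd:
  assumes "i < N"
  shows "((\<lambda>t. psum_prod N J g (y(i := t))) has_field_derivative
     (\<Sum>j\<in>J. real (g j) * t ^ (g j - 1) * psum_prod N (J - {j}) g (y(i := t)))) (at t)"
  unfolding psum_prod_def
  using has_field_derivative_prod[of J "\<lambda>j t. psum N (g j) (y(i := t))"]
    has_field_derivative_psum_fun_upd[OF assms] by simp

lemma partial_psum_prod:
  "i < N \<Longrightarrow> partial i (psum_prod N J g) y
     = (\<Sum>j\<in>J. real (g j) * y i ^ (g j - 1) * psum_prod N (J - {j}) g y)"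
  unfolding partial_def
  using DERIV_imp_deriv[OF has_field_derivative_psum_prod_fun_upd[of i N J g y "y i"]] by simp

lemma partial_partial_psum_prod:
  assumes "i < N"
  shows "partial i (partial i (psum_prod N J g)) y = (\<Sum>j\<in>J.
     real (g j) * real (g j - 1) * y i ^ (g j - 1 - 1) * psum_prod N (J - {j}) g y
   + real (g j) * y i ^ (g j - 1) *
       (\<Sum>l\<in>J - {j}. real (g l) * y i ^ (g l - 1) * psum_prod N (J - {j} - {l}) g y))"
proof -
  have "((\<lambda>t. partial i (psum_prod N J g) (y(i := t))) has_field_derivative (\<Sum>j\<in>J.
     real (g j) * real (g j - 1) * t ^ (g j - 1 - 1) * psum_prod N (J - {j}) g (y(i := t))
   + real (g j) * t ^ (g j - 1) *
       (\<Sum>l\<in>J - {j}. real (g l) * t ^ (g l - 1) * psum_prod N (J - {j} - {l}) g (y(i := t))))) (at t)"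
    for t
    unfolding partial_psum_prod[OF assms] fun_upd_same fun_upd_upd
  proof (intro DERIV_sum)
    fix j
    have "((\<lambda>t. real (g j) * t ^ (g j - 1)) has_field_derivative
        real (g j) * real (g j - 1) * t ^ (g j - 1 - 1)) (at t)"
      by (auto intro!: derivative_eq_intros)
    from DERIV_mult[OF this has_field_derivative_psum_prod_fun_upd[OF assms, of "J - {j}" g y t]]
    show "((\<lambda>t. real (g j) * t ^ (g j - 1) * psum_prod N (J - {j}) g (y(i := t))) has_field_derivative
       real (g j) * real (g j - 1) * t ^ (g j - 1 - 1) * psum_prod N (J - {j}) g (y(i := t))
     + real (g j) * t ^ (g j - 1) *
       (\<Sum>l\<in>J - {j}. real (g l) * t ^ (g l - 1) * psum_prod N (J - {j} - {l}) g (y(i := t)))) (at t)"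
      by (simp add: algebra_simps)
  qed
  from DERIV_imp_deriv[OF this] show ?thesis
    unfolding partial_def[of i "partial i _"] by simp
qed

lemma power2_mult_partial_psum_prod:
  assumes "\<forall>j\<in>J. 1 \<le> g j" and "i < N"
  shows "y i ^ 2 * partial i (psum_prod N J g) y
     = (\<Sum>j\<in>J. real (g j) * y i ^ Suc (g j) * psum_prod N (J - {j}) g y)"
  unfolding partial_psum_prod[OF assms(2)] sum_distrib_left
proof (rule sum.cong[OF refl])
  fix j assume "j \<in> J"
  with assms(1) obtain r where "g j = Suc r" by (cases "g j") auto
  then show "y i ^ 2 * (real (g j) * y i ^ (g j - 1) * psum_prod N (J - {j}) g y)
     = real (g j) * y i ^ Suc (g j) * psum_prod N (J - {j}) g y"
    by (simp add: power2_eq_square)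
qed

lemma power2_mult_partial_partial_psum_prod:
  assumes "\<forall>j\<in>J. 1 \<le> g j" and "i < N"
  shows "y i ^ 2 * partial i (partial i (psum_prod N J g)) y = (\<Sum>j\<in>J.
     real (g j) * (real (g j) - 1) * y i ^ g j * psum_prod N (J - {j}) g y
   + (\<Sum>l\<in>J - {j}. real (g j) * real (g l) * y i ^ (g j + g l) * psum_prod N (J - {j} - {l}) g y))"
  unfolding partial_partial_psum_prod[OF assms(2)] sum_distrib_left[of "y i ^ 2"]
proof (rule sum.cong[OF refl])
  fix j assume j: "j \<in> J"
  have split: "y i ^ 2 * (real (g j) * real (g j - 1) * y i ^ (g j - 1 - 1))
      = real (g j) * (real (g j) - 1) * y i ^ g j"
  proof (cases "g j = 1")
    case False
    with assms(1) j have "g j = Suc (Suc (g j - 2))" by force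
    then obtain r where "g j = Suc (Suc r)" by blast
    then show ?thesis by (simp add: power2_eq_square)
  qed simp
  have join: "y i ^ 2 * (real (g j) * y i ^ (g j - 1) * (real (g l) * y i ^ (g l - 1) * P))
      = real (g j) * real (g l) * y i ^ (g j + g l) * P" if "l \<in> J" for l P
  proof -
    have "1 \<le> g j" "1 \<le> g l" using assms(1) j that by auto
    then obtain r s where "g j = Suc r" "g l = Suc s" using not0_implies_Suc by fastforce
    then show ?thesis by (simp add: power2_eq_square power_add)
  qed
  show "y i ^ 2 * (real (g j) * real (g j - 1) * y i ^ (g j - 1 - 1) * psum_prod N (J - {j}) g y
      + real (g j) * y i ^ (g j - 1) *
        (\<Sum>l\<in>J - {j}. real (g l) * y i ^ (g l - 1) * psum_prod N (J - {j} - {l}) g y))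
    = real (g j) * (real (g j) - 1) * y i ^ g j * psum_prod N (J - {j}) g y
      + (\<Sum>l\<in>J - {j}. real (g j) * real (g l) * y i ^ (g j + g l) * psum_prod N (J - {j} - {l}) g y)"
    unfolding distrib_left
  proof (rule arg_cong2[where f = "(+)"])
    show "y i ^ 2 * (real (g j) * real (g j - 1) * y i ^ (g j - 1 - 1) * psum_prod N (J - {j}) g y)
      = real (g j) * (real (g j) - 1) * y i ^ g j * psum_prod N (J - {j}) g y"
      by (metis split mult.assoc)
    show "y i ^ 2 * (real (g j) * y i ^ (g j - 1) *
        (\<Sum>l\<in>J - {j}. real (g l) * y i ^ (g l - 1) * psum_prod N (J - {j} - {l}) g y))
      = (\<Sum>l\<in>J - {j}. real (g j) * real (g l) * y i ^ (g j + g l) * psum_prod N (J - {j} - {l}) g y)"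
      unfolding sum_distrib_left by (rule sum.cong[OF refl]) (metis join DiffD1)
  qed
qed

lemma sum_power2_mult_partial_partial_psum_prod:
  assumes "\<forall>j\<in>J. 1 \<le> g j"
  shows "(\<Sum>i<N. y i ^ 2 * partial i (partial i (psum_prod N J g)) y) = (\<Sum>j\<in>J.
     real (g j) * (real (g j) - 1) * psum N (g j) y * psum_prod N (J - {j}) g y
   + (\<Sum>l\<in>J - {j}. real (g j) * real (g l) * psum N (g j + g l) y * psum_prod N (J - {j} - {l}) g y))"
proof -
  have "(\<Sum>i<N. y i ^ 2 * partial i (partial i (psum_prod N J g)) y) = (\<Sum>i<N. \<Sum>j\<in>J.
     real (g j) * (real (g j) - 1) * y i ^ g j * psum_prod N (J - {j}) g y
   + (\<Sum>l\<in>J - {j}. real (g j) * real (g l) * y i ^ (g j + g l) * psum_prod N (J - {j} - {l}) g y))"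
    using power2_mult_partial_partial_psum_prod[OF assms] by simp
  also have "\<dots> = (\<Sum>j\<in>J.
     real (g j) * (real (g j) - 1) * psum N (g j) y * psum_prod N (J - {j}) g y
   + (\<Sum>l\<in>J - {j}. real (g j) * real (g l) * psum N (g j + g l) y * psum_prod N (J - {j} - {l}) g y))"
    unfolding psum_def
    by (simp add: sum.distrib sum_distrib_left sum_distrib_right sum.swap[where A = "{..<N}"])
  finally show ?thesis .
qed

lemma sum_offdiag_mult:
  fixes u v :: "nat \<Rightarrow> 'a::comm_ring"
  shows "(\<Sum>i<N. \<Sum>k<N. if i \<noteq> k then u i * v k else 0)
    = (\<Sum>i<N. u i) * (\<Sum>k<N. v k) - (\<Sum>i<N. u i * v i)"
proof -
  have "(\<Sum>k<N. if i \<noteq> k then u i * v k else 0) = (\<Sum>k<N. u i * v k) - u i * v i"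
    if "i < N" for i
  proof -
    have "{..<N} \<inter> {k. i \<noteq> k} = {..<N} - {i}" by auto
    with that show ?thesis by (simp add: sum.If_cases sum_diff1)
  qed
  then show ?thesis by (simp add: sum_subtractf sum_product)
qed

lemma sum_offdiag_power_mult_power:
  fixes y :: "nat \<Rightarrow> real"
  shows "m \<le> r \<Longrightarrow> (\<Sum>i<N. \<Sum>k<N. if i \<noteq> k then y i ^ m * y k ^ (r - m) else 0)
     = psum N m y * psum N (r - m) y - psum N r y"
  using sum_offdiag_mult[where u = "\<lambda>i. y i ^ m" and v = "\<lambda>k. y k ^ (r - m)"]
  by (simp add: psum_def power_add[symmetric])

lemma sum_diff_power_divide:
  fixes x z :: real
  assumes "x \<noteq> z"
  shows "(\<Sum>j\<in>J. c j * x ^ Suc (r j) - c j * z ^ Suc (r j)) / (x - z)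
    = (\<Sum>j\<in>J. c j * (\<Sum>m<Suc (r j). x ^ m * z ^ (r j - m)))"
proof -
  have "c j * x ^ Suc (r j) - c j * z ^ Suc (r j)
      = (x - z) * (c j * (\<Sum>m<Suc (r j). x ^ m * z ^ (r j - m)))" for j
    by (simp only: right_diff_distrib[symmetric] diff_power_eq_sum mult_ac)
  then have "(\<Sum>j\<in>J. c j * x ^ Suc (r j) - c j * z ^ Suc (r j))
      = (x - z) * (\<Sum>j\<in>J. c j * (\<Sum>m<Suc (r j). x ^ m * z ^ (r j - m)))"
    by (simp add: sum_distrib_left)
  with assms show ?thesis by simp
qed

lemma sum_offdiag_divided_difference_psum_prod:
  assumes "\<forall>j\<in>J. 1 \<le> g j" and "\<forall>i<N. \<forall>k<N. i \<noteq> k \<longrightarrow> y i \<noteq> y k"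
  shows "(\<Sum>i<N. \<Sum>k<N. if i \<noteq> k then (y i ^ 2 * partial i (psum_prod N J g) y
          - y k ^ 2 * partial k (psum_prod N J g) y) / (y i - y k) else 0)
    = (\<Sum>j\<in>J. real (g j) * psum_prod N (J - {j}) g y
        * ((\<Sum>m<Suc (g j). psum N m y * psum N (g j - m) y) - real (Suc (g j)) * psum N (g j) y))"
proof -
  let ?c = "\<lambda>j. real (g j) * psum_prod N (J - {j}) g y"
  have pair: "(if i \<noteq> k then (y i ^ 2 * partial i (psum_prod N J g) y
          - y k ^ 2 * partial k (psum_prod N J g) y) / (y i - y k) else 0)
    = (\<Sum>j\<in>J. ?c j * (\<Sum>m<Suc (g j). if i \<noteq> k then y i ^ m * y k ^ (g j - m) else 0))"
    if "i < N" "k < N" for i k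
  proof (cases "i = k")
    case False
    have "y i ^ 2 * partial i (psum_prod N J g) y - y k ^ 2 * partial k (psum_prod N J g) y
        = (\<Sum>j\<in>J. ?c j * y i ^ Suc (g j) - ?c j * y k ^ Suc (g j))"
      unfolding power2_mult_partial_psum_prod[OF assms(1) that(1)]
        power2_mult_partial_psum_prod[OF assms(1) that(2)] sum_subtractf
      by (simp only: mult_ac)
    moreover have "y i \<noteq> y k" using False that assms(2) by blast
    ultimately show ?thesis using False by (simp only: sum_diff_power_divide not_False_eq_True if_True)
  qed simp
  have swap: "(\<Sum>i<N. \<Sum>k<N. \<Sum>m\<in>M. F i k m) = (\<Sum>m\<in>M. \<Sum>i<N. \<Sum>k<N. F i k m)"
    for M :: "'b set" and F :: "nat \<Rightarrow> nat \<Rightarrow> 'b \<Rightarrow> real"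
  proof -
    have "(\<Sum>i<N. \<Sum>k<N. \<Sum>m\<in>M. F i k m) = (\<Sum>i<N. \<Sum>m\<in>M. \<Sum>k<N. F i k m)"
      by (intro sum.cong refl sum.swap)
    then show ?thesis by (simp only: sum.swap[of _ "{..<N}" M])
  qed
  have "(\<Sum>i<N. \<Sum>k<N. if i \<noteq> k then (y i ^ 2 * partial i (psum_prod N J g) y
          - y k ^ 2 * partial k (psum_prod N J g) y) / (y i - y k) else 0)
    = (\<Sum>i<N. \<Sum>k<N. \<Sum>j\<in>J. ?c j * (\<Sum>m<Suc (g j). if i \<noteq> k then y i ^ m * y k ^ (g j - m) else 0))"
    by (intro sum.cong refl pair) simp_all
  also have "\<dots> = (\<Sum>j\<in>J. ?c j * (\<Sum>m<Suc (g j). \<Sum>i<N. \<Sum>k<N. if i \<noteq> k then y i ^ m * y k ^ (g j - m) else 0))"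
    by (simp only: sum_distrib_left swap)
  also have "\<dots> = (\<Sum>j\<in>J. ?c j
        * ((\<Sum>m<Suc (g j). psum N m y * psum N (g j - m) y) - real (Suc (g j)) * psum N (g j) y))"
    by (intro sum.cong refl arg_cong2[where f = "(*)"]) (simp add: sum_offdiag_power_mult_power sum_subtractf)
  finally show ?thesis .
qed

lemma sum_psum_mult_psum_diff:
  assumes "1 \<le> r"
  shows "(\<Sum>m<Suc r. psum N m y * psum N (r - m) y)
    = 2 * real N * psum N r y + (\<Sum>k\<in>{1..<r}. psum N k y * psum N (r - k) y)"
proof -
  have "psum N 0 y = real N" unfolding psum_def by simp
  moreover have "{..<r} = insert 0 {1..<r}" using assms by auto
  ultimately show ?thesis by simp
qed

lemma Dstar_psum_prod:
  assumes "finite J" and "\<forall>j\<in>J. 1 \<le> g j"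
    and "\<forall>i<N. \<forall>k<N. i \<noteq> k \<longrightarrow> y i \<noteq> y k"
  shows "Dstar N (psum_prod N J g) y
    = 2 * (real N - 1) * (\<Sum>j\<in>J. real (g j)) * psum_prod N J g y
    + (\<Sum>j\<in>J. real (g j) * (\<Sum>k\<in>{1..<g j}. psum N k y * psum N (g j - k) y) * psum_prod N (J - {j}) g y)
    + (\<Sum>j\<in>J. \<Sum>l\<in>J - {j}. real (g j) * real (g l) * psum N (g j + g l) y * psum_prod N (J - {j} - {l}) g y)"
proof -
  let ?P = "\<lambda>K. psum_prod N K g y"
  let ?S = "\<lambda>r. \<Sum>k\<in>{1..<r}. psum N k y * psum N (r - k) y"
  have "Dstar N (psum_prod N J g) y
    = (\<Sum>j\<in>J. real (g j) * (real (g j) - 1) * psum N (g j) y * ?P (J - {j})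
        + real (g j) * ?P (J - {j})
          * ((\<Sum>m<Suc (g j). psum N m y * psum N (g j - m) y) - real (Suc (g j)) * psum N (g j) y))
    + (\<Sum>j\<in>J. \<Sum>l\<in>J - {j}. real (g j) * real (g l) * psum N (g j + g l) y * ?P (J - {j} - {l}))"
    unfolding Dstar_def sum_power2_mult_partial_partial_psum_prod[OF assms(2)]
      sum_offdiag_divided_difference_psum_prod[OF assms(2,3)]
    by (simp only: sum.distrib add_ac)
  also have "(\<Sum>j\<in>J. real (g j) * (real (g j) - 1) * psum N (g j) y * ?P (J - {j})
        + real (g j) * ?P (J - {j})
          * ((\<Sum>m<Suc (g j). psum N m y * psum N (g j - m) y) - real (Suc (g j)) * psum N (g j) y))
    = (\<Sum>j\<in>J. 2 * (real N - 1) * (real (g j) * (psum N (g j) y * ?P (J - {j})))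
        + real (g j) * ?S (g j) * ?P (J - {j}))"
    using assms(2) by (intro sum.cong refl) (simp add: sum_psum_mult_psum_diff algebra_simps del: sum.lessThan_Suc)
  also have "\<dots> = 2 * (real N - 1) * (\<Sum>j\<in>J. real (g j)) * ?P J
        + (\<Sum>j\<in>J. real (g j) * ?S (g j) * ?P (J - {j}))"
    using psum_prod_remove[OF assms(1)]
    by (simp add: sum.distrib sum_distrib_left sum_distrib_right mult.assoc)
  finally show ?thesis .
qed

section \<open>Cycles of a permutation\<close>

lemma orbit_of_self: "x \<in> orbit_of f x"
  unfolding orbit_of_def by (auto intro: exI[of _ 0])

lemma orbit_of_subset:
  assumes "f permutes U" and "x \<in> U"
  shows "orbit_of f x \<subseteq> U"
proof -
  have "(f ^^ k) x \<in> U" for k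
    by (induction k) (use assms in \<open>simp_all add: permutes_in_image\<close>)
  then show ?thesis unfolding orbit_of_def by auto
qed

lemma orbit_of_cong:
  assumes "x \<in> S" and "\<And>z. z \<in> S \<Longrightarrow> f z \<in> S" and "\<And>z. z \<in> S \<Longrightarrow> f z = g z"
  shows "orbit_of f x = orbit_of g x"
proof -
  have "(f ^^ k) x = (g ^^ k) x \<and> (f ^^ k) x \<in> S" for k
    by (induction k) (use assms in auto)
  then show ?thesis unfolding orbit_of_def by auto
qed

lemma orbit_of_cyclic_enumeration:
  assumes "0 < m" and "inj_on s {..<m}" and "\<And>i. i < m \<Longrightarrow> f (s i) = s (Suc i mod m)"
    and "i < m"
  shows "orbit_of f (s i) = s ` {..<m}" and "card (orbit_of f (s i)) = m"
proof -
  have iter: "(f ^^ k) (s i) = s ((i + k) mod m)" for k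
  proof (induction k)
    case (Suc k)
    then show ?case using assms(1,3) by (simp add: mod_Suc_eq)
  qed (use assms(4) in simp)
  have "s j \<in> orbit_of f (s i)" if "j < m" for j
  proof -
    have "s j = s ((i + (j + m - i)) mod m)" using that assms(4) by simp
    then show ?thesis unfolding orbit_of_def iter by blast
  qed
  moreover have "orbit_of f (s i) \<subseteq> s ` {..<m}"
    unfolding orbit_of_def iter using assms(1) by auto
  ultimately show eq: "orbit_of f (s i) = s ` {..<m}" by blast
  show "card (orbit_of f (s i)) = m" unfolding eq card_image[OF assms(2)] by simp
qed

lemma bij_betw_concat_lessThan:
  fixes r r' :: nat
  assumes "bij_betw f {..<r} A" and "bij_betw g {..<r'} B" and "A \<inter> B = {}"
  shows "bij_betw (\<lambda>i. if i < r then f i else g (i - r)) {..<r + r'} (A \<union> B)"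
proof -
  have "bij_betw (\<lambda>i. i - r) {r..<r + r'} {..<r'}"
    by (rule bij_betw_byWitness[where f' = "plus r"]) auto
  then have "bij_betw (\<lambda>i. g (i - r)) {r..<r + r'} B"
    using bij_betw_trans[OF _ assms(2)] by (simp add: comp_def)
  then have "bij_betw (\<lambda>i. if i < r then f i else g (i - r)) {r..<r + r'} B"
    by (rule bij_betw_cong[THEN iffD1, rotated]) auto
  moreover have "bij_betw (\<lambda>i. if i < r then f i else g (i - r)) {..<r} A"
    using assms(1) by (rule bij_betw_cong[THEN iffD1, rotated]) auto
  ultimately have "bij_betw (\<lambda>i. if i < r then f i else g (i - r)) ({..<r} \<union> {r..<r + r'}) (A \<union> B)"
    using assms(3) by (intro bij_betw_combine)
  moreover have "{..<r} \<union> {r..<r + r'} = {..<r + r'}" by auto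
  ultimately show ?thesis by simp
qed

definition perm_orbits :: "nat \<Rightarrow> (nat \<Rightarrow> nat) \<Rightarrow> nat set set" where
  "perm_orbits n \<alpha> = orbit_of \<alpha> ` {..<n}"

lemma cycle_type_eq_card_perm_orbits:
  "cycle_type n \<alpha> = image_mset card (mset_set (perm_orbits n \<alpha>))"
  unfolding cycle_type_def perm_orbits_def ..

lemma ppart_cycle_type: "ppart N (cycle_type n \<alpha>) y = psum_prod N (perm_orbits n \<alpha>) card y"
  unfolding ppart_def psum_prod_def cycle_type_eq_card_perm_orbits image_mset.compositionality
    prod_unfold_prod_mset by (simp add: comp_def)

lemma finite_perm_orbits: "finite (perm_orbits n \<alpha>)"
  unfolding perm_orbits_def by simp

context
  fixes n :: nat and \<alpha> :: "nat \<Rightarrow> nat"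
  assumes \<alpha>: "\<alpha> permutes {..<n}"
begin

lemma permutation_if_permutes_lessThan: "permutation \<alpha>"
  by (rule permutes_imp_permutation[OF finite_lessThan \<alpha>])

lemma orbit_of_eq_orbit: "orbit_of \<alpha> x = orbit \<alpha> x"
  unfolding orbit_of_def
  by (rule orbit_altdef_permutation[symmetric, OF permutation_if_permutes_lessThan])

lemma orbit_of_eqI:
  assumes "y \<in> orbit_of \<alpha> x"
  shows "orbit_of \<alpha> y = orbit_of \<alpha> x"
proof -
  note perm = permutation_if_permutes_lessThan
  have y: "y \<in> orbit \<alpha> x" using assms unfolding orbit_of_eq_orbit .
  have x: "x \<in> orbit \<alpha> y" by (rule orbit_swap[OF permutation_self_in_orbit[OF perm] y])
  show ?thesis unfolding orbit_of_eq_orbit using orbit_trans[OF _ x] orbit_trans[OF _ y] by blast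
qed

lemma orbit_of_apply: "orbit_of \<alpha> (\<alpha> x) = orbit_of \<alpha> x"
  unfolding orbit_of_eq_orbit
  by (rule permutation_orbit_step[OF permutation_if_permutes_lessThan])

lemma apply_in_orbit_of_iff: "\<alpha> x \<in> orbit_of \<alpha> y \<longleftrightarrow> x \<in> orbit_of \<alpha> y"
  using orbit_of_eqI orbit_of_apply orbit_of_self by metis

lemma orbit_of_enumeration:
  fixes a :: nat
  defines "r \<equiv> card (orbit_of \<alpha> a)"
  shows "0 < r" and "(\<alpha> ^^ r) a = a" and "orbit_of \<alpha> a = (\<lambda>i. (\<alpha> ^^ i) a) ` {..<r}"
    and "inj_on (\<lambda>i. (\<alpha> ^^ i) a) {..<r}"
proof -
  have a: "a \<in> orbit \<alpha> a"
    by (rule permutation_self_in_orbit[OF permutation_if_permutes_lessThan])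
  have img: "orbit_of \<alpha> a = (\<lambda>i. (\<alpha> ^^ i) a) ` {..<funpow_dist1 \<alpha> a a}"
    unfolding orbit_of_eq_orbit orbit_conv_funpow_dist1[OF a] by (simp add: atLeast0LessThan)
  have inj: "inj_on (\<lambda>i. (\<alpha> ^^ i) a) {..<funpow_dist1 \<alpha> a a}"
    using inj_on_funpow_dist1[OF a] by (simp add: atLeast0LessThan)
  have "r = funpow_dist1 \<alpha> a a" unfolding r_def img card_image[OF inj] by simp
  then show "0 < r" "(\<alpha> ^^ r) a = a" "orbit_of \<alpha> a = (\<lambda>i. (\<alpha> ^^ i) a) ` {..<r}"
      "inj_on (\<lambda>i. (\<alpha> ^^ i) a) {..<r}"
    using funpow_dist1_prop[OF a] img inj by simp_all
qed

lemma perm_orbits_subset: "A \<in> perm_orbits n \<alpha> \<Longrightarrow> A \<subseteq> {..<n}"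
  unfolding perm_orbits_def using orbit_of_subset[OF \<alpha>] by auto

lemma finite_perm_orbit: "A \<in> perm_orbits n \<alpha> \<Longrightarrow> finite A"
  using perm_orbits_subset finite_subset by blast

lemma perm_orbits_eq_orbit_of: "A \<in> perm_orbits n \<alpha> \<Longrightarrow> x \<in> A \<Longrightarrow> A = orbit_of \<alpha> x"
  unfolding perm_orbits_def using orbit_of_eqI by auto

lemma orbit_of_in_perm_orbits: "x < n \<Longrightarrow> orbit_of \<alpha> x \<in> perm_orbits n \<alpha>"
  unfolding perm_orbits_def by simp

lemma disjoint_perm_orbits: "disjoint (perm_orbits n \<alpha>)"
  unfolding disjoint_def using perm_orbits_eq_orbit_of by blast

lemma Union_perm_orbits: "\<Union>(perm_orbits n \<alpha>) = {..<n}"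
  using perm_orbits_subset orbit_of_self unfolding perm_orbits_def by blast

lemma card_perm_orbits_pos:
  assumes "A \<in> perm_orbits n \<alpha>"
  shows "0 < card A"
proof -
  have "finite A" using finite_perm_orbit[OF assms] .
  moreover have "A \<noteq> {}" using assms orbit_of_self unfolding perm_orbits_def by blast
  ultimately show ?thesis by (simp add: card_gt_0_iff)
qed

lemma sum_card_perm_orbits: "(\<Sum>A\<in>perm_orbits n \<alpha>. card A) = n"
  using card_Union_disjoint[OF disjoint_perm_orbits] perm_orbits_subset Union_perm_orbits
  by (metis card_lessThan finite_lessThan finite_subset)

lemma cycle_type_in_partitions: "cycle_type n \<alpha> \<in> partitions n"
  using card_perm_orbits_pos sum_card_perm_orbits finite_perm_orbits
  unfolding partitions_def cycle_type_eq_card_perm_orbits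
  by (simp add: sum_unfold_sum_mset[symmetric])

end

section \<open>Multiplying by a transposition\<close>

lemma permutes_apply_notin_closed:
  assumes "\<alpha> permutes {..<n}" and "\<And>x. x \<in> X \<Longrightarrow> orbit_of \<alpha> x \<subseteq> X" and "z \<notin> X"
  shows "\<alpha> z \<notin> X"
  using assms apply_in_orbit_of_iff[OF assms(1)] orbit_of_self by blast

lemma perm_orbits_local_change:
  assumes \<alpha>: "\<alpha> permutes {..<n}" and "X \<subseteq> {..<n}"
    and closed: "\<And>x. x \<in> X \<Longrightarrow> orbit_of \<alpha> x \<subseteq> X"
    and agree: "\<And>z. z \<in> {..<n} - X \<Longrightarrow> \<beta> z = \<alpha> z"
  shows "perm_orbits n \<beta> = orbit_of \<beta> ` X \<union> (perm_orbits n \<alpha> - orbit_of \<alpha> ` X)"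
    and "orbit_of \<beta> ` X \<inter> (perm_orbits n \<alpha> - orbit_of \<alpha> ` X) = {}"
proof -
  have disj: "orbit_of \<alpha> y \<inter> X = {}" if "y \<in> {..<n} - X" for y
    using that closed orbit_of_eqI[OF \<alpha>] orbit_of_self by (metis disjoint_iff Diff_iff subsetD)
  have outside: "orbit_of \<beta> y = orbit_of \<alpha> y" if "y \<in> {..<n} - X" for y
  proof (rule orbit_of_cong[OF that])
    fix z assume z: "z \<in> {..<n} - X"
    then have "\<alpha> z \<notin> X" using permutes_apply_notin_closed[OF \<alpha> closed] by blast
    then show "\<beta> z \<in> {..<n} - X" using z agree permutes_in_image[OF \<alpha>] by auto
  qed (use agree in simp)
  have "{..<n} = X \<union> ({..<n} - X)" using assms(2) by blast
  then have "perm_orbits n \<beta> = orbit_of \<beta> ` X \<union> orbit_of \<beta> ` ({..<n} - X)"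
    unfolding perm_orbits_def by (metis image_Un)
  also have "orbit_of \<beta> ` ({..<n} - X) = orbit_of \<alpha> ` ({..<n} - X)"
    using outside by (rule image_cong[OF refl])
  finally have "perm_orbits n \<beta> = orbit_of \<beta> ` X \<union> orbit_of \<alpha> ` ({..<n} - X)" .
  moreover have rest: "orbit_of \<alpha> ` ({..<n} - X) = perm_orbits n \<alpha> - orbit_of \<alpha> ` X"
    using disj closed orbit_of_self unfolding perm_orbits_def by fastforce
  ultimately show "perm_orbits n \<beta> = orbit_of \<beta> ` X \<union> (perm_orbits n \<alpha> - orbit_of \<alpha> ` X)"
    by simp
  show "orbit_of \<beta> ` X \<inter> (perm_orbits n \<alpha> - orbit_of \<alpha> ` X) = {}"
  proof (rule equals0I)
    fix A assume "A \<in> orbit_of \<beta> ` X \<inter> (perm_orbits n \<alpha> - orbit_of \<alpha> ` X)"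
    then obtain x y where "x \<in> X" "A = orbit_of \<beta> x" "y \<in> {..<n} - X" "A = orbit_of \<alpha> y"
      unfolding rest[symmetric] by blast
    then show False using disj orbit_of_self by blast
  qed
qed

lemma prod_perm_orbits_local_change:
  assumes "\<alpha> permutes {..<n}" and "X \<subseteq> {..<n}"
    and "\<And>x. x \<in> X \<Longrightarrow> orbit_of \<alpha> x \<subseteq> X"
    and "\<And>z. z \<in> {..<n} - X \<Longrightarrow> \<beta> z = \<alpha> z"
  shows "(\<Prod>A\<in>perm_orbits n \<beta>. f A)
    = (\<Prod>A\<in>orbit_of \<beta> ` X. f A) * (\<Prod>A\<in>perm_orbits n \<alpha> - orbit_of \<alpha> ` X. f A)"
proof -
  have "finite (orbit_of \<beta> ` X)" using assms(2) finite_subset by blast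
  then have "(\<Prod>A\<in>orbit_of \<beta> ` X \<union> (perm_orbits n \<alpha> - orbit_of \<alpha> ` X). f A)
    = (\<Prod>A\<in>orbit_of \<beta> ` X. f A) * (\<Prod>A\<in>perm_orbits n \<alpha> - orbit_of \<alpha> ` X. f A)"
    by (intro prod.union_disjoint finite_Diff finite_perm_orbits perm_orbits_local_change(2)[OF assms])
  then show ?thesis by (simp only: perm_orbits_local_change(1)[OF assms])
qed

lemma prod_perm_orbits_transpose:
  assumes \<alpha>: "\<alpha> permutes {..<n}" and "X \<subseteq> {..<n}"
    and closed: "\<And>x. x \<in> X \<Longrightarrow> orbit_of \<alpha> x \<subseteq> X" and "a \<in> X" "b \<in> X"
  shows "(\<Prod>A\<in>perm_orbits n (Transposition.transpose a b \<circ> \<alpha>). f A)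
    = (\<Prod>A\<in>orbit_of (Transposition.transpose a b \<circ> \<alpha>) ` X. f A)
      * (\<Prod>A\<in>perm_orbits n \<alpha> - orbit_of \<alpha> ` X. f A)"
proof (rule prod_perm_orbits_local_change[OF assms(1-3)])
  fix z assume "z \<in> {..<n} - X"
  then have "\<alpha> z \<notin> X" using permutes_apply_notin_closed[OF \<alpha> closed] by blast
  then show "(Transposition.transpose a b \<circ> \<alpha>) z = \<alpha> z"
    using \<open>a \<in> X\<close> \<open>b \<in> X\<close> by (metis comp_apply transpose_apply_other)
qed

lemma orbit_of_image_self:
  assumes "\<alpha> permutes {..<n}"
  shows "orbit_of \<alpha> ` orbit_of \<alpha> a = {orbit_of \<alpha> a}"
  using orbit_of_eqI[OF assms] orbit_of_self by blast

lemma transpose_same_orbit_apply: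
  fixes a k :: nat
  assumes \<alpha>: "\<alpha> permutes {..<n}"
  defines "r \<equiv> card (orbit_of \<alpha> a)" and "\<beta> \<equiv> Transposition.transpose a ((\<alpha> ^^ k) a) \<circ> \<alpha>"
  assumes k: "0 < k" "k < r"
  shows "i < k \<Longrightarrow> \<beta> ((\<alpha> ^^ i) a) = (\<alpha> ^^ (Suc i mod k)) a"
    and "i < r - k \<Longrightarrow> \<beta> ((\<alpha> ^^ (k + i)) a) = (\<alpha> ^^ (k + Suc i mod (r - k))) a"
proof -
  let ?s = "\<lambda>i. (\<alpha> ^^ i) a"
  note enum = orbit_of_enumeration[OF \<alpha>, of a, folded r_def]
  have s_inj: "?s i = ?s j \<longleftrightarrow> i = j" if "i < r" "j < r" for i j
    using enum(4) that by (auto dest: inj_onD)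
  have "?s r = a" using enum(2) by simp
  show "\<beta> (?s i) = ?s (Suc i mod k)" if "i < k"
  proof (cases "Suc i = k")
    case False
    then have "?s (Suc i) \<noteq> ?s 0" "?s (Suc i) \<noteq> ?s k"
      using that k s_inj[of "Suc i" 0] s_inj[of "Suc i" k] by auto
    then show ?thesis using that False unfolding \<beta>_def by simp
  next
    case True
    then have "\<alpha> (?s i) = ?s k" by auto
    with True show ?thesis unfolding \<beta>_def by simp
  qed
  show "\<beta> (?s (k + i)) = ?s (k + Suc i mod (r - k))" if "i < r - k"
  proof (cases "Suc (k + i) = r")
    case False
    then have "?s (Suc (k + i)) \<noteq> ?s 0" "?s (Suc (k + i)) \<noteq> ?s k"
      using that k s_inj[of "Suc (k + i)" 0] s_inj[of "Suc (k + i)" k] by auto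
    then show ?thesis using that False unfolding \<beta>_def by simp
  next
    case True
    then have "r - k = Suc i" by simp
    then have "Suc i mod (r - k) = 0" by simp
    moreover have "\<alpha> (?s (k + i)) = a" using True \<open>?s r = a\<close> by auto
    ultimately show ?thesis unfolding \<beta>_def by simp
  qed
qed

lemma orbits_transpose_same_orbit:
  fixes a k :: nat
  assumes \<alpha>: "\<alpha> permutes {..<n}"
  defines "r \<equiv> card (orbit_of \<alpha> a)" and "\<beta> \<equiv> Transposition.transpose a ((\<alpha> ^^ k) a) \<circ> \<alpha>"
  assumes k: "0 < k" "k < r"
  obtains P Q where "orbit_of \<beta> ` orbit_of \<alpha> a = {P, Q}" and "P \<noteq> Q"
    and "card P = k" and "card Q = r - k"
proof -
  define s where "s i = (\<alpha> ^^ i) a" for i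
  note enum = orbit_of_enumeration[OF \<alpha>, of a, folded r_def s_def]
  note cyc = transpose_same_orbit_apply[OF \<alpha> k[unfolded r_def], folded r_def \<beta>_def s_def]
  define P Q where "P = s ` {..<k}" and "Q = (\<lambda>i. s (k + i)) ` {..<r - k}"
  have inj1: "inj_on s {..<k}" using inj_on_subset[OF enum(4)] k by auto
  have inj2: "inj_on (\<lambda>i. s (k + i)) {..<r - k}"
  proof (rule inj_onI)
    fix i j assume "i \<in> {..<r - k}" "j \<in> {..<r - k}" "s (k + i) = s (k + j)"
    then show "i = j" using inj_onD[OF enum(4), of "k + i" "k + j"] by simp
  qed
  note orbP = orbit_of_cyclic_enumeration[OF k(1) inj1 cyc(1), folded P_def]
  note orbQ = orbit_of_cyclic_enumeration[where s = "\<lambda>i. s (k + i)", OF _ inj2 cyc(2), folded Q_def]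
  have "orbit_of \<beta> ` orbit_of \<alpha> a = {P, Q}"
  proof -
    have "{..<r} = {..<k} \<union> plus k ` {0..<r - k}" using k by auto
    then have "orbit_of \<alpha> a = s ` {..<k} \<union> (\<lambda>i. s (k + i)) ` {..<r - k}"
      unfolding enum(3) by (simp add: image_Un image_image atLeast0LessThan)
    moreover have "orbit_of \<beta> ` s ` {..<k} = (\<lambda>_. P) ` {..<k}"
      "orbit_of \<beta> ` (\<lambda>i. s (k + i)) ` {..<r - k} = (\<lambda>_. Q) ` {..<r - k}"
      by (simp_all add: image_image orbP(1) orbQ(1) cong: image_cong_simp)
    ultimately show ?thesis
      using k by (simp add: image_Un image_constant_conv lessThan_empty_iff insert_commute)
  qed
  moreover have "a \<in> P" using k unfolding P_def s_def by force
  moreover have "a \<notin> Q"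
  proof
    assume "a \<in> Q"
    then obtain i where "i < r - k" "s (k + i) = s 0" unfolding Q_def s_def by auto
    moreover have "k + i < r" using \<open>i < r - k\<close> by linarith
    ultimately show False using inj_onD[OF enum(4), of "k + i" 0] k by simp
  qed
  moreover have "card P = k" "card Q = r - k"
    using orbP[of 0] orbQ[of 0] k by simp_all
  ultimately show thesis using that by blast
qed

lemma prod_perm_orbits_transpose_same_orbit:
  fixes h :: "nat \<Rightarrow> 'a::comm_monoid_mult"
  assumes \<alpha>: "\<alpha> permutes {..<n}" and "a < n"
    and k: "0 < k" "k < card (orbit_of \<alpha> a)"
  shows "(\<Prod>A\<in>perm_orbits n (Transposition.transpose a ((\<alpha> ^^ k) a) \<circ> \<alpha>). h (card A))
    = h k * h (card (orbit_of \<alpha> a) - k) * (\<Prod>A\<in>perm_orbits n \<alpha> - {orbit_of \<alpha> a}. h (card A))"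
proof -
  obtain P Q where PQ: "orbit_of (Transposition.transpose a ((\<alpha> ^^ k) a) \<circ> \<alpha>) ` orbit_of \<alpha> a = {P, Q}"
    "P \<noteq> Q" "card P = k" "card Q = card (orbit_of \<alpha> a) - k"
    using orbits_transpose_same_orbit[OF \<alpha> k] .
  have "(\<alpha> ^^ k) a \<in> orbit_of \<alpha> a" unfolding orbit_of_def by blast
  then have "(\<Prod>A\<in>perm_orbits n (Transposition.transpose a ((\<alpha> ^^ k) a) \<circ> \<alpha>). h (card A))
    = (\<Prod>A\<in>{P, Q}. h (card A)) * (\<Prod>A\<in>perm_orbits n \<alpha> - {orbit_of \<alpha> a}. h (card A))"
    using prod_perm_orbits_transpose[OF \<alpha> orbit_of_subset[OF \<alpha>] _ orbit_of_self]
      orbit_of_eqI[OF \<alpha>] \<open>a < n\<close> unfolding PQ(1)[symmetric] orbit_of_image_self[OF \<alpha>] by simp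
  with PQ(2-4) show ?thesis by (simp add: mult.assoc)
qed

lemma transpose_other_orbit_apply:
  fixes a b :: nat
  assumes \<alpha>: "\<alpha> permutes {..<n}" and b: "b \<notin> orbit_of \<alpha> a" and "i < card (orbit_of \<alpha> a)"
  shows "(Transposition.transpose a b \<circ> \<alpha>) ((\<alpha> ^^ i) a)
    = (if Suc i = card (orbit_of \<alpha> a) then b else (\<alpha> ^^ Suc i) a)"
proof (cases "Suc i = card (orbit_of \<alpha> a)")
  case True
  have "(\<alpha> ^^ Suc i) a = a" by (simp only: True orbit_of_enumeration(2)[OF \<alpha>])
  then have "\<alpha> ((\<alpha> ^^ i) a) = a" by simp
  with True show ?thesis by simp
next
  case False
  note enum = orbit_of_enumeration[OF \<alpha>, of a]
  have "Suc i < card (orbit_of \<alpha> a)" using False assms(3) by simp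
  then have "(\<alpha> ^^ Suc i) a \<noteq> a" using inj_onD[OF enum(4), of "Suc i" 0] by auto
  moreover have "(\<alpha> ^^ Suc i) a \<noteq> b" using b unfolding orbit_of_def by blast
  ultimately show ?thesis using False by simp
qed

lemma orbit_of_transpose_other_orbit:
  fixes a b :: nat
  assumes \<alpha>: "\<alpha> permutes {..<n}" and b: "b \<notin> orbit_of \<alpha> a"
  defines "\<beta> \<equiv> Transposition.transpose a b \<circ> \<alpha>" and "C \<equiv> orbit_of \<alpha> a \<union> orbit_of \<alpha> b"
  shows "orbit_of \<beta> ` C = {C}" and "card C = card (orbit_of \<alpha> a) + card (orbit_of \<alpha> b)"
proof -
  define r r' where "r = card (orbit_of \<alpha> a)" and "r' = card (orbit_of \<alpha> b)"
  define s where "s = (\<lambda>i. if i < r then (\<alpha> ^^ i) a else (\<alpha> ^^ (i - r)) b)"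
  note ea = orbit_of_enumeration[OF \<alpha>, of a, folded r_def]
  note eb = orbit_of_enumeration[OF \<alpha>, of b, folded r'_def]
  have a: "a \<notin> orbit_of \<alpha> b" using b orbit_of_eqI[OF \<alpha>] orbit_of_self by metis
  have "orbit_of \<alpha> a \<inter> orbit_of \<alpha> b = {}"
    using b orbit_of_eqI[OF \<alpha>] orbit_of_self by blast
  then have bij: "bij_betw s {..<r + r'} C"
    unfolding s_def C_def using ea(3,4) eb(3,4)
    by (intro bij_betw_concat_lessThan) (simp_all add: bij_betw_def)
  have cyc: "\<beta> (s i) = s (Suc i mod (r + r'))" if "i < r + r'" for i
  proof (cases "i < r")
    case True
    then have "\<beta> (s i) = (if Suc i = r then b else (\<alpha> ^^ Suc i) a)"
      using transpose_other_orbit_apply[OF \<alpha> b, of i] unfolding \<beta>_def s_def r_def by simp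
    moreover have "s (Suc i mod (r + r')) = (if Suc i = r then b else (\<alpha> ^^ Suc i) a)"
      using True eb(1) unfolding s_def by auto
    ultimately show ?thesis by simp
  next
    case False
    define j where "j = i - r"
    have j: "j < r'" "i = r + j" using that False unfolding j_def by auto
    then have "\<beta> (s i) = (if Suc j = r' then a else (\<alpha> ^^ Suc j) b)"
      using transpose_other_orbit_apply[OF \<alpha> a, of j]
      unfolding \<beta>_def s_def r'_def transpose_commute[of a b] by simp
    moreover have "s (Suc i mod (r + r')) = (if Suc j = r' then a else (\<alpha> ^^ Suc j) b)"
      using j ea(1) unfolding s_def by auto
    ultimately show ?thesis by simp
  qed
  have "0 < r + r'" using ea(1) by simp
  note orb = orbit_of_cyclic_enumeration[OF this bij_betw_imp_inj_on[OF bij] cyc,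
      unfolded bij_betw_imp_surj_on[OF bij]]
  have "orbit_of \<beta> ` s ` {..<r + r'} = (\<lambda>_. C) ` {..<r + r'}"
    by (simp add: image_image orb(1) cong: image_cong_simp)
  then show "orbit_of \<beta> ` C = {C}"
    using \<open>0 < r + r'\<close> bij_betw_imp_surj_on[OF bij] by (simp add: image_constant_conv lessThan_empty_iff)
  show "card C = card (orbit_of \<alpha> a) + card (orbit_of \<alpha> b)"
    using bij_betw_same_card[OF bij] unfolding r_def r'_def by simp
qed

lemma prod_perm_orbits_transpose_other_orbit:
  fixes h :: "nat \<Rightarrow> 'a::comm_monoid_mult"
  assumes \<alpha>: "\<alpha> permutes {..<n}" and "a < n" "b < n" and b: "b \<notin> orbit_of \<alpha> a"
  shows "(\<Prod>A\<in>perm_orbits n (Transposition.transpose a b \<circ> \<alpha>). h (card A))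
    = h (card (orbit_of \<alpha> a) + card (orbit_of \<alpha> b))
      * (\<Prod>A\<in>perm_orbits n \<alpha> - {orbit_of \<alpha> a, orbit_of \<alpha> b}. h (card A))"
proof -
  let ?X = "orbit_of \<alpha> a \<union> orbit_of \<alpha> b"
  have "orbit_of \<alpha> ` ?X = {orbit_of \<alpha> a, orbit_of \<alpha> b}"
    using orbit_of_image_self[OF \<alpha>] by (simp add: image_Un insert_commute)
  moreover have "orbit_of \<alpha> x \<subseteq> ?X" if "x \<in> ?X" for x
    using that orbit_of_eqI[OF \<alpha>] by auto
  moreover have "?X \<subseteq> {..<n}" using orbit_of_subset[OF \<alpha>] \<open>a < n\<close> \<open>b < n\<close> by auto
  ultimately show ?thesis
    using prod_perm_orbits_transpose[OF \<alpha>, of ?X a b "\<lambda>A. h (card A)"]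
      orbit_of_transpose_other_orbit[OF \<alpha> b] orbit_of_self[of a] orbit_of_self[of b] by simp
qed

lemma sum_offdiag_eq_twice_sum_pairs:
  fixes f :: "nat \<Rightarrow> nat \<Rightarrow> 'a::semiring_1"
  assumes sym: "\<And>a b. f a b = f b a"
  shows "(\<Sum>a<n. \<Sum>b\<in>{..<n} - {a}. f a b) = 2 * (\<Sum>(a, b)\<in>{(a, b). a < b \<and> b < n}. f a b)"
proof -
  define S where "S = {(a, b). a < b \<and> b < n}"
  have fin: "finite S" unfolding S_def by (rule finite_subset[of _ "{..<n} \<times> {..<n}"]) auto
  have "(SIGMA a:{..<n}. {..<n} - {a}) = S \<union> prod.swap ` S" unfolding S_def by auto
  moreover have "S \<inter> prod.swap ` S = {}" unfolding S_def by auto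
  moreover have "(\<Sum>(a, b)\<in>prod.swap ` S. f a b) = (\<Sum>(a, b)\<in>S. f a b)"
    by (simp add: sum.reindex case_prod_beta sym)
  ultimately have "(\<Sum>(a, b)\<in>(SIGMA a:{..<n}. {..<n} - {a}). f a b) = 2 * (\<Sum>(a, b)\<in>S. f a b)"
    using fin by (simp add: sum.union_disjoint mult_2)
  then show ?thesis unfolding S_def by (simp add: sum.Sigma)
qed

lemma sum_transpose_same_orbit:
  fixes h :: "nat \<Rightarrow> 'a::comm_semiring_1"
  assumes \<alpha>: "\<alpha> permutes {..<n}" and "a < n"
  shows "(\<Sum>b\<in>orbit_of \<alpha> a - {a}. \<Prod>A\<in>perm_orbits n (Transposition.transpose a b \<circ> \<alpha>). h (card A))
    = (\<Sum>k\<in>{1..<card (orbit_of \<alpha> a)}. h k * h (card (orbit_of \<alpha> a) - k))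
      * (\<Prod>A\<in>perm_orbits n \<alpha> - {orbit_of \<alpha> a}. h (card A))"
proof -
  define r where "r = card (orbit_of \<alpha> a)"
  note enum = orbit_of_enumeration[OF \<alpha>, of a, folded r_def]
  have inj: "inj_on (\<lambda>k. (\<alpha> ^^ k) a) {1..<r}" by (rule inj_on_subset[OF enum(4)]) auto
  have "(\<lambda>k. (\<alpha> ^^ k) a) ` {1..<r} = orbit_of \<alpha> a - {a}"
  proof -
    have "{..<r} = insert 0 {1..<r}" using enum(1) by auto
    moreover have "a \<notin> (\<lambda>k. (\<alpha> ^^ k) a) ` {1..<r}"
    proof
      assume "a \<in> (\<lambda>k. (\<alpha> ^^ k) a) ` {1..<r}"
      then obtain k where "k \<in> {1..<r}" "(\<alpha> ^^ k) a = (\<alpha> ^^ 0) a" by auto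
      then show False using inj_onD[OF enum(4), of k 0] enum(1) by auto
    qed
    ultimately show ?thesis unfolding enum(3) by auto
  qed
  then have "(\<Sum>b\<in>orbit_of \<alpha> a - {a}. \<Prod>A\<in>perm_orbits n (Transposition.transpose a b \<circ> \<alpha>). h (card A))
     = (\<Sum>k\<in>{1..<r}. \<Prod>A\<in>perm_orbits n (Transposition.transpose a ((\<alpha> ^^ k) a) \<circ> \<alpha>). h (card A))"
    using sum.reindex[OF inj] by simp
  also have "\<dots> = (\<Sum>k\<in>{1..<r}. h k * h (r - k) * (\<Prod>A\<in>perm_orbits n \<alpha> - {orbit_of \<alpha> a}. h (card A)))"
  proof (intro sum.cong refl)
    fix k assume "k \<in> {1..<r}"
    then show "(\<Prod>A\<in>perm_orbits n (Transposition.transpose a ((\<alpha> ^^ k) a) \<circ> \<alpha>). h (card A))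
      = h k * h (r - k) * (\<Prod>A\<in>perm_orbits n \<alpha> - {orbit_of \<alpha> a}. h (card A))"
      using prod_perm_orbits_transpose_same_orbit[OF assms, of k h] unfolding r_def by simp
  qed
  finally show ?thesis unfolding r_def by (simp add: sum_distrib_right)
qed

lemma sum_transpose_other_orbits:
  fixes h :: "nat \<Rightarrow> 'a::comm_semiring_1"
  assumes \<alpha>: "\<alpha> permutes {..<n}" and "a < n"
  shows "(\<Sum>b\<in>{..<n} - orbit_of \<alpha> a. \<Prod>A\<in>perm_orbits n (Transposition.transpose a b \<circ> \<alpha>). h (card A))
    = (\<Sum>B\<in>perm_orbits n \<alpha> - {orbit_of \<alpha> a}. of_nat (card B) * h (card (orbit_of \<alpha> a) + card B)
        * (\<Prod>A\<in>perm_orbits n \<alpha> - {orbit_of \<alpha> a} - {B}. h (card A)))"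
proof -
  define C where "C = orbit_of \<alpha> a"
  have C: "C \<in> perm_orbits n \<alpha>" unfolding C_def using orbit_of_in_perm_orbits[OF \<alpha> \<open>a < n\<close>] .
  have fin: "\<forall>B\<in>perm_orbits n \<alpha> - {C}. finite B"
    using finite_perm_orbit[OF \<alpha>] by blast
  have disj: "\<forall>A\<in>perm_orbits n \<alpha> - {C}. \<forall>B\<in>perm_orbits n \<alpha> - {C}. A \<noteq> B \<longrightarrow> A \<inter> B = {}"
    using disjoint_perm_orbits[OF \<alpha>] by (auto simp: disjoint_def)
  have "{..<n} - C = \<Union>(perm_orbits n \<alpha> - {C})"
    using Union_perm_orbits[OF \<alpha>] disjoint_perm_orbits[OF \<alpha>] C
    by (auto simp: disjoint_def)
  then have "(\<Sum>b\<in>{..<n} - C. \<Prod>A\<in>perm_orbits n (Transposition.transpose a b \<circ> \<alpha>). h (card A))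
    = (\<Sum>B\<in>perm_orbits n \<alpha> - {C}. \<Sum>b\<in>B. \<Prod>A\<in>perm_orbits n (Transposition.transpose a b \<circ> \<alpha>). h (card A))"
    by (simp only: sum.Union_disjoint[OF fin disj] comp_apply)
  also have "\<dots> = (\<Sum>B\<in>perm_orbits n \<alpha> - {C}. \<Sum>b\<in>B. h (card C + card B)
      * (\<Prod>A\<in>perm_orbits n \<alpha> - {C} - {B}. h (card A)))"
  proof (intro sum.cong refl)
    fix B b assume B: "B \<in> perm_orbits n \<alpha> - {C}" and "b \<in> B"
    then have "B = orbit_of \<alpha> b" "b < n" "b \<notin> C"
      using perm_orbits_eq_orbit_of[OF \<alpha>] perm_orbits_subset[OF \<alpha>] C by blast+
    moreover have "perm_orbits n \<alpha> - {C, B} = perm_orbits n \<alpha> - {C} - {B}" by auto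
    ultimately show "(\<Prod>A\<in>perm_orbits n (Transposition.transpose a b \<circ> \<alpha>). h (card A))
      = h (card C + card B) * (\<Prod>A\<in>perm_orbits n \<alpha> - {C} - {B}. h (card A))"
      using prod_perm_orbits_transpose_other_orbit[OF \<alpha> \<open>a < n\<close>, of b h] unfolding C_def by simp
  qed
  finally show ?thesis unfolding C_def by (simp add: mult.assoc)
qed


lemma twice_sum_transpositions_prod_perm_orbits:
  fixes h :: "nat \<Rightarrow> 'a::comm_semiring_1"
  assumes \<alpha>: "\<alpha> permutes {..<n}"
  shows "2 * (\<Sum>(a, b)\<in>{(a, b). a < b \<and> b < n}.
      \<Prod>A\<in>perm_orbits n (Transposition.transpose a b \<circ> \<alpha>). h (card A))
    = (\<Sum>C\<in>perm_orbits n \<alpha>. of_nat (card C) * (\<Sum>k\<in>{1..<card C}. h k * h (card C - k))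
        * (\<Prod>A\<in>perm_orbits n \<alpha> - {C}. h (card A)))
    + (\<Sum>C\<in>perm_orbits n \<alpha>. \<Sum>B\<in>perm_orbits n \<alpha> - {C}.
        of_nat (card C) * of_nat (card B) * h (card C + card B)
        * (\<Prod>A\<in>perm_orbits n \<alpha> - {C} - {B}. h (card A)))"
proof -
  define G where "G C = (\<Sum>k\<in>{1..<card C}. h k * h (card C - k)) * (\<Prod>A\<in>perm_orbits n \<alpha> - {C}. h (card A))
    + (\<Sum>B\<in>perm_orbits n \<alpha> - {C}. of_nat (card B) * h (card C + card B)
        * (\<Prod>A\<in>perm_orbits n \<alpha> - {C} - {B}. h (card A)))" for C
  let ?F = "\<lambda>a b. \<Prod>A\<in>perm_orbits n (Transposition.transpose a b \<circ> \<alpha>). h (card A)"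
  have "2 * (\<Sum>(a, b)\<in>{(a, b). a < b \<and> b < n}. ?F a b) = (\<Sum>a<n. \<Sum>b\<in>{..<n} - {a}. ?F a b)"
    by (rule sum_offdiag_eq_twice_sum_pairs[symmetric]) (simp add: transpose_commute)
  also have "\<dots> = (\<Sum>a<n. G (orbit_of \<alpha> a))"
  proof (rule sum.cong[OF refl])
    fix a assume "a \<in> {..<n}"
    then have sub: "orbit_of \<alpha> a \<subseteq> {..<n}" using orbit_of_subset[OF \<alpha>] by simp
    then have "{..<n} - {a} = (orbit_of \<alpha> a - {a}) \<union> ({..<n} - orbit_of \<alpha> a)"
      using orbit_of_self[of a \<alpha>] by auto
    then have "(\<Sum>b\<in>{..<n} - {a}. ?F a b)
        = (\<Sum>b\<in>orbit_of \<alpha> a - {a}. ?F a b) + (\<Sum>b\<in>{..<n} - orbit_of \<alpha> a. ?F a b)"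
      by (simp only:) (rule sum.union_disjoint, use sub finite_subset in auto)
    then show "(\<Sum>b\<in>{..<n} - {a}. ?F a b) = G (orbit_of \<alpha> a)"
      using sum_transpose_same_orbit[OF \<alpha>, of a h] sum_transpose_other_orbits[OF \<alpha>, of a h] \<open>a \<in> {..<n}\<close>
      unfolding G_def by simp
  qed
  also have "\<dots> = (\<Sum>C\<in>perm_orbits n \<alpha>. \<Sum>a\<in>C. G (orbit_of \<alpha> a))"
    using disjoint_perm_orbits[OF \<alpha>] finite_perm_orbit[OF \<alpha>]
    by (subst Union_perm_orbits[OF \<alpha>, symmetric], subst sum.Union_disjoint)
      (auto simp: disjoint_def)
  also have "\<dots> = (\<Sum>C\<in>perm_orbits n \<alpha>. of_nat (card C) * G C)"
    using perm_orbits_eq_orbit_of[OF \<alpha>] by (intro sum.cong refl) simp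
  also have "\<dots> = (\<Sum>C\<in>perm_orbits n \<alpha>. of_nat (card C) * (\<Sum>k\<in>{1..<card C}. h k * h (card C - k))
        * (\<Prod>A\<in>perm_orbits n \<alpha> - {C}. h (card A)))
    + (\<Sum>C\<in>perm_orbits n \<alpha>. \<Sum>B\<in>perm_orbits n \<alpha> - {C}.
        of_nat (card C) * of_nat (card B) * h (card C + card B)
        * (\<Prod>A\<in>perm_orbits n \<alpha> - {C} - {B}. h (card A)))"
    unfolding G_def distrib_left sum.distrib
    by (intro arg_cong2[where f = "(+)"] sum.cong refl) (simp add: mult.assoc, simp add: sum_distrib_left mult.assoc)
  finally show ?thesis .
qed

section \<open>Permutations of a given cycle type\<close>

lemma cycle_of_list_upt_apply:
  assumes "i < n - m"
  shows "cycle_of_list [m..<n] (m + i) = m + Suc i mod (n - m)"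
proof -
  have "map (cycle_of_list [m..<n]) [m..<n] = rotate1 [m..<n]"
    using cyclic_rotation[of "[m..<n]" 1] by simp
  then have "cycle_of_list [m..<n] ([m..<n] ! i) = rotate1 [m..<n] ! i"
    using assms by (metis length_upt nth_map)
  moreover have "Suc i mod (n - m) < n - m" using assms by simp
  ultimately show ?thesis using assms by (simp add: nth_rotate1)
qed

lemma perm_orbits_comp_cycle_of_list:
  fixes m n :: nat
  assumes \<alpha>': "\<alpha>' permutes {..<m}" and "m < n"
  defines "\<alpha> \<equiv> \<alpha>' \<circ> cycle_of_list [m..<n]"
  shows "\<alpha> permutes {..<n}" and "perm_orbits n \<alpha> = insert {m..<n} (perm_orbits m \<alpha>')"
    and "{m..<n} \<notin> perm_orbits m \<alpha>'"
proof -
  define C r where "C = {m..<n}" and "r = n - m"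
  have c: "cycle_of_list [m..<n] permutes C" unfolding C_def using cycle_permutes[of "[m..<n]"] by simp
  show "\<alpha> permutes {..<n}"
    unfolding \<alpha>_def using \<open>m < n\<close>
    by (intro permutes_compose permutes_subset[OF c] permutes_subset[OF \<alpha>']) (auto simp: C_def)
  have fix': "\<alpha>' x = x" if "x \<in> C" for x
    using permutes_not_in[OF \<alpha>'] that unfolding C_def by simp
  have low: "orbit_of \<alpha> y = orbit_of \<alpha>' y" if "y < m" for y
  proof (rule orbit_of_cong[where S = "{..<m}"])
    fix z assume "z \<in> {..<m}"
    then have "\<alpha> z = \<alpha>' z" unfolding \<alpha>_def by (simp add: id_outside_supp)
    with \<open>z \<in> {..<m}\<close> show "\<alpha> z \<in> {..<m}" "\<alpha> z = \<alpha>' z"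
      using permutes_in_image[OF \<alpha>'] by auto
  qed (use that in simp)
  have cyc: "\<alpha> (m + i) = m + Suc i mod r" if "i < r" for i
  proof -
    have "Suc i mod r < r" using that by simp
    then have "m + Suc i mod r \<in> C" unfolding C_def r_def by simp
    then show ?thesis using that fix' cycle_of_list_upt_apply[of i n m] unfolding \<alpha>_def r_def by simp
  qed
  have "C = plus m ` {0..<r}"
    unfolding image_add_atLeastLessThan C_def r_def using \<open>m < n\<close> by simp
  then have C: "C = plus m ` {..<r}" by (simp only: atLeast0LessThan)
  have high: "orbit_of \<alpha> y = C" if "y \<in> C" for y
  proof -
    have "y - m < r" "y = m + (y - m)" using that unfolding C_def r_def by auto
    moreover have "inj_on (plus m) {..<r}" by simp
    moreover have "0 < r" unfolding r_def using \<open>m < n\<close> by simp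
    ultimately show ?thesis
      using orbit_of_cyclic_enumeration(1)[of r "plus m" \<alpha> "y - m"] cyc C by metis
  qed
  have "{..<n} = {..<m} \<union> C" unfolding C_def using \<open>m < n\<close> by auto
  moreover have "C \<noteq> {}" using \<open>m < n\<close> unfolding C_def by simp
  then have "orbit_of \<alpha> ` C = {C}" by (simp add: high image_constant_conv cong: image_cong_simp)
  ultimately show "perm_orbits n \<alpha> = insert {m..<n} (perm_orbits m \<alpha>')"
    unfolding perm_orbits_def C_def[symmetric] using low by (auto simp: image_Un)
  show "{m..<n} \<notin> perm_orbits m \<alpha>'"
    using perm_orbits_subset[OF \<alpha>'] \<open>m < n\<close> by fastforce
qed

lemma ex_permutes_cycle_type:
  "\<sigma> \<in> partitions n \<Longrightarrow> \<exists>\<alpha>. \<alpha> permutes {..<n} \<and> cycle_type n \<alpha> = \<sigma>"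
proof (induction \<sigma> arbitrary: n)
  case empty
  then have "n = 0" unfolding partitions_def by simp
  then show ?case unfolding cycle_type_def by (intro exI[of _ id]) (simp add: permutes_id id_def)
next
  case (add r \<sigma>)
  define m where "m = n - r"
  have "0 < r" "r \<le> n" "\<sigma> \<in> partitions m"
    using add.prems unfolding partitions_def m_def by auto
  then obtain \<alpha>' where \<alpha>': "\<alpha>' permutes {..<m}" "cycle_type m \<alpha>' = \<sigma>"
    using add.IH by blast
  have "m < n" "card {m..<n} = r" unfolding m_def using \<open>0 < r\<close> \<open>r \<le> n\<close> by auto
  note \<alpha> = perm_orbits_comp_cycle_of_list[OF \<alpha>'(1) \<open>m < n\<close>]
  have "cycle_type n (\<alpha>' \<circ> cycle_of_list [m..<n]) = add_mset r \<sigma>"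
    unfolding cycle_type_eq_card_perm_orbits \<alpha>(2) \<alpha>'(2)[symmetric]
    using \<alpha>(3) \<open>card {m..<n} = r\<close> by (simp add: finite_perm_orbits)
  with \<alpha>(1) show ?case by blast
qed

section \<open>The matrix \<open>A\<^sub>n\<close>\<close>

lemma finite_partitions: "finite (partitions n)"
proof -
  have "partitions n \<subseteq> mset ` {xs. set xs \<subseteq> {..n} \<and> length xs \<le> n}"
  proof
    fix \<sigma> assume "\<sigma> \<in> partitions n"
    then have pos: "\<forall>k\<in>#\<sigma>. 0 < k" and "sum_mset \<sigma> = n" unfolding partitions_def by auto
    moreover have "size \<sigma> \<le> sum_mset \<sigma>" "\<forall>k\<in>#\<sigma>. k \<le> sum_mset \<sigma>"
      using pos by (induction \<sigma>) auto
    moreover obtain xs where "mset xs = \<sigma>" using ex_mset by blast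
    ultimately show "\<sigma> \<in> mset ` {xs. set xs \<subseteq> {..n} \<and> length xs \<le> n}"
      by (auto simp flip: set_mset_mset)
  qed
  moreover have "finite (mset ` {xs. set xs \<subseteq> {..n} \<and> length xs \<le> n})"
    by (intro finite_imageI finite_lists_length_le) simp
  ultimately show ?thesis by (rule finite_subset)
qed

lemma sum_of_nat_card_fibres_mult:
  fixes w :: "'b \<Rightarrow> 'c::semiring_1"
  assumes "finite S" and "finite T" and "f ` S \<subseteq> T"
  shows "(\<Sum>t\<in>T. of_nat (card {s \<in> S. f s = t}) * w t) = (\<Sum>s\<in>S. w (f s))"
proof -
  have "(\<Sum>s\<in>S. w (f s)) = (\<Sum>t\<in>T. \<Sum>s\<in>{s \<in> S. f s = t}. w (f s))"
    using sum.group[OF assms, of "\<lambda>s. w (f s)"] by simp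
  also have "\<dots> = (\<Sum>t\<in>T. of_nat (card {s \<in> S. f s = t}) * w t)"
    by (intro sum.cong refl) simp
  finally show ?thesis ..
qed

definition perm_of_cycle_type :: "nat \<Rightarrow> nat multiset \<Rightarrow> nat \<Rightarrow> nat" where
  "perm_of_cycle_type n \<sigma> = (SOME \<alpha>. \<alpha> permutes {..<n} \<and> cycle_type n \<alpha> = \<sigma>)"

lemma perm_of_cycle_type:
  assumes "\<sigma> \<in> partitions n"
  shows "perm_of_cycle_type n \<sigma> permutes {..<n}" and "cycle_type n (perm_of_cycle_type n \<sigma>) = \<sigma>"
  using someI_ex[OF ex_permutes_cycle_type[OF assms]] unfolding perm_of_cycle_type_def by auto

lemma sum_A_mat_mult_ppart:
  assumes "\<sigma> \<in> partitions n"
  shows "(\<Sum>\<tau>\<in>partitions n. real (A_mat n \<sigma> \<tau>) * ppart N \<tau> y)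
    = (\<Sum>(a, b)\<in>{(a, b). a < b \<and> b < n}.
        ppart N (cycle_type n (Transposition.transpose a b \<circ> perm_of_cycle_type n \<sigma>)) y)"
proof -
  let ?\<alpha> = "perm_of_cycle_type n \<sigma>"
  let ?f = "\<lambda>(a, b). cycle_type n (Transposition.transpose a b \<circ> ?\<alpha>)"
  define S where "S = {(a, b). a < b \<and> b < (n::nat)}"
  have "finite S" unfolding S_def by (rule finite_subset[of _ "{..<n} \<times> {..<n}"]) auto
  moreover have "?f ` S \<subseteq> partitions n"
    using perm_of_cycle_type(1)[OF assms] unfolding S_def
    by (auto intro!: cycle_type_in_partitions permutes_compose permutes_swap_id)
  moreover have "A_mat n \<sigma> \<tau> = card {p \<in> S. ?f p = \<tau>}" for \<tau>
    unfolding A_mat_def perm_of_cycle_type_def[symmetric] S_def Let_def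
    by (rule arg_cong[where f = card]) auto
  ultimately show ?thesis
    using sum_of_nat_card_fibres_mult[OF _ finite_partitions,
        where S = S and f = ?f and w = "\<lambda>\<tau>. ppart N \<tau> y"]
    unfolding S_def by (simp add: case_prod_beta)
qed

theorem mainTheorem8:
  fixes n N :: nat and sig :: "nat multiset" and x :: "nat \<Rightarrow> real"
  assumes "n \<ge> 1" and "N > n" and "sig \<in> partitions n"
    and "\<forall>i<N. \<forall>j<N. i \<noteq> j \<longrightarrow> x i \<noteq> x j"
  shows "(1/2) * Dstar N (ppart N sig) x
           = real n * (real N - 1) * ppart N sig x
             + (\<Sum>lam\<in>partitions n. real (A_mat n sig lam) * ppart N lam x)"
proof -
  let ?\<alpha> = "perm_of_cycle_type n sig"
  let ?J = "perm_orbits n ?\<alpha>"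
  note \<alpha> = perm_of_cycle_type[OF assms(3)]
  have P: "ppart N sig = psum_prod N ?J card" by (rule ext) (metis ppart_cycle_type \<alpha>(2))
  have "Dstar N (ppart N sig) x = 2 * (real N - 1) * real n * ppart N sig x
      + 2 * (\<Sum>(a, b)\<in>{(a, b). a < b \<and> b < n}.
          \<Prod>A\<in>perm_orbits n (Transposition.transpose a b \<circ> ?\<alpha>). psum N (card A) x)"
    unfolding P
    using Dstar_psum_prod[OF finite_perm_orbits _ assms(4), of n ?\<alpha> card]
      twice_sum_transpositions_prod_perm_orbits[OF \<alpha>(1), of "\<lambda>r. psum N r x"]
      sum_card_perm_orbits[OF \<alpha>(1)] card_perm_orbits_pos[OF \<alpha>(1)]
    by (simp add: Suc_le_eq psum_prod_def flip: of_nat_sum)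
  then show ?thesis by (simp add: sum_A_mat_mult_ppart[OF assms(3)] ppart_cycle_type psum_prod_def)
qed

end
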